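(* Let $w \in S_n$. If $w$ contains a $321$ pattern, then the Schubert polynomial $\mathfrak{S}_w$ is not a complete homogeneous monomial.
   Context: $h^i_j$ is the complete homogeneous symmetric polynomial of degree $j$ in $x_1,\dots,x_i$; a complete homogeneous monomial is a product $h^1_{a_1}h^2_{a_2}\cdots$ with nonnegative integers $a_i$, finitely many nonzero. Schubert polynomials: $\mathfrak{S}_{w_0} = x_1^{n-1}\cdots x_{n-1}$ for the longest $w_0 \in S_n$, and $\partial_i\mathfrak{S}_w = \mathfrak{S}_{ws_i}$ if $\ell(ws_i)=\ell(w)-1$, $0$ otherwise, where $\partial_i f = (f-s_if)/(x_i-x_{i+1})$. $w$ contains a $321$ pattern if there are $i<j<k$ with $w(i)>w(j)>w(k)$. *)

theory Defs
  imports "HOL-Library.Poly_Mapping" "HOL-Combinatorics.Combinatorics"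
begin

text \<open>Polynomials in variables x_1, x_2, ... (indexed by nat) with integer coefficients:
  maps from exponent vectors (nat =>0 nat) to coefficients.\<close>
type_synonym mpoly = "(nat \<Rightarrow>\<^sub>0 nat) \<Rightarrow>\<^sub>0 int"

definition var :: "nat \<Rightarrow> mpoly" where
  "var i = Poly_Mapping.single (Poly_Mapping.single i 1) 1"

definition mono :: "(nat \<Rightarrow>\<^sub>0 nat) \<Rightarrow> mpoly" where
  "mono m = Poly_Mapping.single m 1"

definition swap_exp :: "nat \<Rightarrow> (nat \<Rightarrow>\<^sub>0 nat) \<Rightarrow> (nat \<Rightarrow>\<^sub>0 nat)" where
  "swap_exp i m = Abs_poly_mapping (\<lambda>k. Poly_Mapping.lookup m (transpose i (Suc i) k))"

definition swap_var :: "nat \<Rightarrow> mpoly \<Rightarrow> mpoly" where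
  "swap_var i f = Abs_poly_mapping (\<lambda>m. Poly_Mapping.lookup f (swap_exp i m))"

definition divdiff :: "nat \<Rightarrow> mpoly \<Rightarrow> mpoly" where
  "divdiff i f = (THE g. (var i - var (Suc i)) * g = f - swap_var i f)"

definition inv_len :: "nat \<Rightarrow> (nat \<Rightarrow> nat) \<Rightarrow> nat" where
  "inv_len n w = card {(i, j). 1 \<le> i \<and> i < j \<and> j \<le> n \<and> w i > w j}"

definition longest :: "nat \<Rightarrow> nat \<Rightarrow> nat" where
  "longest n i = (if i \<in> {1..n} then n + 1 - i else i)"

definition is_schubert_family :: "nat \<Rightarrow> ((nat \<Rightarrow> nat) \<Rightarrow> mpoly) \<Rightarrow> bool" where
  "is_schubert_family n S \<longleftrightarrow>
     S (longest n) = (\<Prod>i\<in>{1..<n}. var i ^ (n - i)) \<and>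
     (\<forall>w i. w permutes {1..n} \<longrightarrow> 1 \<le> i \<longrightarrow> i < n \<longrightarrow>
        divdiff i (S w) =
          (if inv_len n (w \<circ> transpose i (Suc i)) + 1 = inv_len n w
           then S (w \<circ> transpose i (Suc i)) else 0))"

definition complete_h :: "nat \<Rightarrow> nat \<Rightarrow> mpoly" where
  "complete_h i j = (\<Sum>m\<in>{m. Poly_Mapping.keys m \<subseteq> {1..i} \<and> (\<Sum>k\<in>{1..i}. Poly_Mapping.lookup m k) = j}. mono m)"

definition complete_hom_monomial :: "mpoly \<Rightarrow> bool" where
  "complete_hom_monomial f \<longleftrightarrow> (\<exists>a :: nat \<Rightarrow>\<^sub>0 nat. 0 \<notin> Poly_Mapping.keys a \<and> f = (\<Prod>i\<in>Poly_Mapping.keys a. complete_h i (Poly_Mapping.lookup a i)))"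

definition contains_321 :: "nat \<Rightarrow> (nat \<Rightarrow> nat) \<Rightarrow> bool" where
  "contains_321 n w \<longleftrightarrow> (\<exists>i j k. 1 \<le> i \<and> i < j \<and> j < k \<and> k \<le> n \<and> w i > w j \<and> w j > w k)"

end

theory Submission
  imports Defs
begin

(* A product of complete homogeneous polynomials h^i_j with i >= 1 contains the pure power x_1^D
   (D its degree) with coefficient 1: each factor is x_1^j plus terms involving some other variable,
   and such terms form an ideal.

   On the other side, descend from S_{w_0} = x_1^(n-1) ... x_(n-1) by divided differences, always
   at the first ascent i of w, so that w is decreasing on 1..i.  Along the way every monomial x^a of
   S_w has degree l(w), and a_k is at most the number of positions j in [k, n] for which w(j) is not
   a left-to-right maximum of w(k), ..., w(n).  For k = 1 these are the right ends of inversions;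
   a 321 pattern at i < j < k gives two inversions (i, k) and (j, k) with the same right end, so
   a_1 < l(w) and x_1^l(w) does not occur in S_w. *)

section \<open>Divided differences of monomials\<close>

lemma lookup_swap_exp [simp]:
  "Poly_Mapping.lookup (swap_exp i m) k = Poly_Mapping.lookup m (transpose i (Suc i) k)"
proof -
  have "{k. Poly_Mapping.lookup m (transpose i (Suc i) k) \<noteq> 0} = transpose i (Suc i) ` Poly_Mapping.keys m"
    by (auto simp: in_keys_iff intro: rev_image_eqI[of "transpose i (Suc i) x" for x])
  then show ?thesis
    by (simp add: swap_exp_def)
qed

lemma swap_exp_swap_exp [simp]: "swap_exp i (swap_exp i m) = m"
  by (rule poly_mapping_eqI) simp

lemma lookup_swap_var [simp]:
  "Poly_Mapping.lookup (swap_var i f) m = Poly_Mapping.lookup f (swap_exp i m)"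
proof -
  have "{m. Poly_Mapping.lookup f (swap_exp i m) \<noteq> 0} = swap_exp i ` Poly_Mapping.keys f"
    by (auto simp: in_keys_iff intro: rev_image_eqI[of "swap_exp i x" for x])
  then show ?thesis
    by (simp add: swap_var_def)
qed

lemma mono_mult: "Defs.mono a * Defs.mono b = Defs.mono (a + b)"
  by (simp add: Defs.mono_def mult_single)

lemma var_eq_mono: "var i = Defs.mono (Poly_Mapping.single i 1)"
  by (simp add: var_def Defs.mono_def)

lemma mono_zero [simp]: "Defs.mono 0 = 1"
  by (simp add: Defs.mono_def)

lemma var_power: "var i ^ e = Defs.mono (Poly_Mapping.single i e)"
  by (induction e) (simp_all add: var_eq_mono mono_mult flip: single_add)

lemma prod_mono: "finite A \<Longrightarrow> (\<Prod>a\<in>A. Defs.mono (g a)) = Defs.mono (\<Sum>a\<in>A. g a)"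
  by (induction A rule: finite_induct) (simp_all add: mono_mult)

lemma keys_mono [simp]: "Poly_Mapping.keys (Defs.mono m) = {m}"
  by (simp add: Defs.mono_def)

lemma poly_mapping_sum_singles:
  "f = (\<Sum>m\<in>Poly_Mapping.keys f. Poly_Mapping.single m (Poly_Mapping.lookup f m))"
  by (rule poly_mapping_eqI) (simp add: lookup_sum lookup_single when_def in_keys_iff sum.delta)

lemma swap_var_sum_singles:
  "swap_var i f = (\<Sum>m\<in>Poly_Mapping.keys f. Poly_Mapping.single (swap_exp i m) (Poly_Mapping.lookup f m))"
proof (rule poly_mapping_eqI)
  fix k
  have "Poly_Mapping.lookup (\<Sum>m\<in>Poly_Mapping.keys f. Poly_Mapping.single (swap_exp i m) (Poly_Mapping.lookup f m)) k
      = (\<Sum>m\<in>Poly_Mapping.keys f. if m = swap_exp i k then Poly_Mapping.lookup f m else 0)"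
    unfolding lookup_sum
    by (rule sum.cong) (auto simp: lookup_single when_def)
  then show "Poly_Mapping.lookup (swap_var i f) k = Poly_Mapping.lookup (\<Sum>m\<in>Poly_Mapping.keys f. Poly_Mapping.single (swap_exp i m) (Poly_Mapping.lookup f m)) k"
    by (simp add: sum.delta in_keys_iff)
qed

definition replace_pair :: "nat \<Rightarrow> nat \<Rightarrow> nat \<Rightarrow> (nat \<Rightarrow>\<^sub>0 nat) \<Rightarrow> (nat \<Rightarrow>\<^sub>0 nat)" where
  "replace_pair i g h m = Poly_Mapping.update i g (Poly_Mapping.update (Suc i) h m)"

lemma lookup_replace_pair [simp]:
  "Poly_Mapping.lookup (replace_pair i g h m) k =
     (if k = i then g else if k = Suc i then h else Poly_Mapping.lookup m k)"
  by (simp add: replace_pair_def lookup_update)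

lemma replace_pair_same: "replace_pair i (Poly_Mapping.lookup m i) (Poly_Mapping.lookup m (Suc i)) m = m"
  by (rule poly_mapping_eqI) simp

lemma replace_pair_swapped:
  "replace_pair i (Poly_Mapping.lookup m (Suc i)) (Poly_Mapping.lookup m i) m = swap_exp i m"
  by (rule poly_mapping_eqI) (simp add: transpose_def)

lemma var_diff_mult_replace_pair:
  "(var i - var (Suc i)) * Defs.mono (replace_pair i g h m) =
     Defs.mono (replace_pair i (Suc g) h m) - Defs.mono (replace_pair i g (Suc h) m)"
proof -
  have "Poly_Mapping.single i 1 + replace_pair i g h m = replace_pair i (Suc g) h m"
    and "Poly_Mapping.single (Suc i) 1 + replace_pair i g h m = replace_pair i g (Suc h) m"
    by (auto intro!: poly_mapping_eqI simp: lookup_add lookup_single when_def)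
  then show ?thesis
    by (simp add: left_diff_distrib var_eq_mono mono_mult)
qed

lemma var_diff_mult_sum_replace_pair:
  assumes "c \<le> d" "d \<le> s"
  shows "(var i - var (Suc i)) * (\<Sum>g\<in>{c..<d}. Defs.mono (replace_pair i g (s - 1 - g) m)) =
           Defs.mono (replace_pair i d (s - d) m) - Defs.mono (replace_pair i c (s - c) m)"
proof -
  define F where "F g = Defs.mono (replace_pair i g (s - g) m)" for g
  have "(var i - var (Suc i)) * Defs.mono (replace_pair i g (s - 1 - g) m) = F (Suc g) - F g"
    if "g < s" for g
    using var_diff_mult_replace_pair[of i g "s - 1 - g" m] that
    by (simp add: F_def Suc_diff_Suc)
  then have "(var i - var (Suc i)) * (\<Sum>g\<in>{c..<d}. Defs.mono (replace_pair i g (s - 1 - g) m)) =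
      (\<Sum>g\<in>{c..<d}. F (Suc g) - F g)"
    unfolding sum_distrib_left using assms by (intro sum.cong) auto
  also have "\<dots> = F d - F c"
    using assms(1) by (rule sum_Suc_diff')
  finally show ?thesis
    by (simp add: F_def)
qed

definition divdiff_mono :: "nat \<Rightarrow> (nat \<Rightarrow>\<^sub>0 nat) \<Rightarrow> mpoly" where
  "divdiff_mono i m =
     (let a = Poly_Mapping.lookup m i; b = Poly_Mapping.lookup m (Suc i);
          t = \<lambda>g. Defs.mono (replace_pair i g (a + b - 1 - g) m)
      in sum t {b..<a} - sum t {a..<b})"

lemma var_diff_mult_divdiff_mono:
  "(var i - var (Suc i)) * divdiff_mono i m = Defs.mono m - Defs.mono (swap_exp i m)"
proof -
  define a where "a = Poly_Mapping.lookup m i"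
  define b where "b = Poly_Mapping.lookup m (Suc i)"
  have ends: "Defs.mono (replace_pair i a (a + b - a) m) = Defs.mono m"
             "Defs.mono (replace_pair i b (a + b - b) m) = Defs.mono (swap_exp i m)"
    by (simp_all add: a_def b_def replace_pair_same replace_pair_swapped)
  show ?thesis
  proof (cases "b \<le> a")
    case True
    then show ?thesis
      using var_diff_mult_sum_replace_pair[of b a "a + b" i m] ends
      by (simp add: divdiff_mono_def Let_def a_def[symmetric] b_def[symmetric] right_diff_distrib)
  next
    case False
    then show ?thesis
      using var_diff_mult_sum_replace_pair[of a b "a + b" i m] ends
      by (simp add: divdiff_mono_def Let_def a_def[symmetric] b_def[symmetric] right_diff_distrib)
  qed
qed

lemma keys_diff: "Poly_Mapping.keys (f - g) \<subseteq> Poly_Mapping.keys f \<union> Poly_Mapping.keys (g :: 'a \<Rightarrow>\<^sub>0 'b :: ab_group_add)"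
  by (auto simp: in_keys_iff lookup_minus)

lemma keys_divdiff_mono:
  fixes i :: nat and m :: "nat \<Rightarrow>\<^sub>0 nat"
  defines "a \<equiv> Poly_Mapping.lookup m i" and "b \<equiv> Poly_Mapping.lookup m (Suc i)"
  assumes "m' \<in> Poly_Mapping.keys (divdiff_mono i m)"
  obtains g where "m' = replace_pair i g (a + b - 1 - g) m" "min a b \<le> g" "g < max a b"
proof -
  define t where "t g = Defs.mono (replace_pair i g (a + b - 1 - g) m)" for g
  have "divdiff_mono i m = sum t {b..<a} - sum t {a..<b}"
    by (simp add: divdiff_mono_def Let_def a_def b_def t_def)
  then have "m' \<in> Poly_Mapping.keys (sum t {b..<a}) \<union> Poly_Mapping.keys (sum t {a..<b})"
    using assms(3) keys_diff[of "sum t {b..<a}" "sum t {a..<b}"] by auto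
  then obtain g where g: "g \<in> {b..<a} \<union> {a..<b}" "m' \<in> Poly_Mapping.keys (t g)"
    using keys_sum[of t "{b..<a}"] keys_sum[of t "{a..<b}"] by blast
  show ?thesis
  proof (rule that)
    show "m' = replace_pair i g (a + b - 1 - g) m"
      using g(2) by (simp add: t_def)
    show "min a b \<le> g" "g < max a b"
      using g(1) by auto
  qed
qed

lemma divdiff_unique:
  assumes "(var i - var (Suc i)) * g = f - swap_var i f"
  shows "divdiff i f = g"
proof -
  have "Poly_Mapping.single i (1::nat) \<noteq> Poly_Mapping.single (Suc i) 1"
    by (metis lookup_single_eq lookup_single_not_eq n_not_Suc_n one_neq_zero)
  then have "var i \<noteq> var (Suc i)"
    by (simp add: var_def frag_of_eq)
  then have nonzero: "var i - var (Suc i) \<noteq> 0"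
    by simp
  show ?thesis
    unfolding divdiff_def
  proof (rule the_equality)
    fix h
    assume "(var i - var (Suc i)) * h = f - swap_var i f"
    with assms nonzero show "h = g"
      by (metis mult_left_cancel)
  qed (rule assms)
qed

lemma divdiff_eq_sum:
  "divdiff i f = (\<Sum>m\<in>Poly_Mapping.keys f. of_int (Poly_Mapping.lookup f m) * divdiff_mono i m)"
  (is "_ = ?D")
proof (rule divdiff_unique)
  have "(var i - var (Suc i)) * ?D
      = (\<Sum>m\<in>Poly_Mapping.keys f. Poly_Mapping.single m (Poly_Mapping.lookup f m)
                                   - Poly_Mapping.single (swap_exp i m) (Poly_Mapping.lookup f m))"
    unfolding sum_distrib_left
    by (intro sum.cong) (simp_all add: mult.left_commute var_diff_mult_divdiff_mono right_diff_distrib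
        Defs.mono_def mult_single flip: single_of_int)
  also have "\<dots> = f - swap_var i f"
    by (simp add: sum_subtractf flip: poly_mapping_sum_singles swap_var_sum_singles)
  finally show "(var i - var (Suc i)) * ?D = f - swap_var i f" .
qed

lemma keys_divdiff:
  assumes "m' \<in> Poly_Mapping.keys (divdiff i f)"
  obtains m g where "m \<in> Poly_Mapping.keys f"
    and "m' = replace_pair i g (Poly_Mapping.lookup m i + Poly_Mapping.lookup m (Suc i) - 1 - g) m"
    and "min (Poly_Mapping.lookup m i) (Poly_Mapping.lookup m (Suc i)) \<le> g"
    and "g < max (Poly_Mapping.lookup m i) (Poly_Mapping.lookup m (Suc i))"
proof -
  define c where "c m = (of_int (Poly_Mapping.lookup f m) :: mpoly)" for m
  obtain m where m: "m \<in> Poly_Mapping.keys f" "m' \<in> Poly_Mapping.keys (c m * divdiff_mono i m)"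
    using assms keys_sum[of "\<lambda>m. c m * divdiff_mono i m" "Poly_Mapping.keys f"]
    unfolding divdiff_eq_sum c_def by blast
  have "Poly_Mapping.keys (c m * divdiff_mono i m) \<subseteq> Poly_Mapping.keys (divdiff_mono i m)"
    using keys_mult[of "c m" "divdiff_mono i m"] by (auto simp: c_def simp flip: single_of_int split: if_splits)
  with m(2) have "m' \<in> Poly_Mapping.keys (divdiff_mono i m)"
    by blast
  then show ?thesis
    by (rule keys_divdiff_mono) (rule that[OF m(1)])
qed

definition total_degree :: "(nat \<Rightarrow>\<^sub>0 nat) \<Rightarrow> nat" where
  "total_degree m = (\<Sum>k\<in>Poly_Mapping.keys m. Poly_Mapping.lookup m k)"

lemma total_degree_add: "total_degree (a + b) = total_degree a + total_degree b"
  unfolding total_degree_def by (rule setsum_keys_plus_distrib) simp_all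

lemma total_degree_single [simp]: "total_degree (Poly_Mapping.single k e) = e"
  by (simp add: total_degree_def)

lemma total_degree_zero [simp]: "total_degree 0 = 0"
  by (simp add: total_degree_def)

lemma total_degree_sum: "total_degree (\<Sum>a\<in>A. f a) = (\<Sum>a\<in>A. total_degree (f a))"
  by (induction A rule: infinite_finite_induct) (simp_all add: total_degree_add)

lemma total_degree_replace_pair:
  "total_degree (replace_pair i g h m) + Poly_Mapping.lookup m i + Poly_Mapping.lookup m (Suc i) =
     total_degree m + g + h"
proof -
  have "replace_pair i g h m + Poly_Mapping.single i (Poly_Mapping.lookup m i)
          + Poly_Mapping.single (Suc i) (Poly_Mapping.lookup m (Suc i))
        = m + Poly_Mapping.single i g + Poly_Mapping.single (Suc i) h"
    by (rule poly_mapping_eqI) (simp add: lookup_add lookup_single when_def)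
  then show ?thesis
    by (metis total_degree_add total_degree_single)
qed

section \<open>Inversions and left-to-right maxima\<close>

definition inversions :: "nat \<Rightarrow> (nat \<Rightarrow> nat) \<Rightarrow> (nat \<times> nat) set" where
  "inversions n w = {(i, j). 1 \<le> i \<and> i < j \<and> j \<le> n \<and> w i > w j}"

lemma inv_len_eq_card_inversions: "inv_len n w = card (inversions n w)"
  by (simp add: inv_len_def inversions_def)

lemma inversions_subset: "inversions n w \<subseteq> {1..n} \<times> {1..n}"
  by (auto simp: inversions_def)

lemma finite_inversions [simp]: "finite (inversions n w)"
  using inversions_subset by (rule finite_subset) simp

lemma inv_len_le: "inv_len n w \<le> n * n"
  using card_mono[OF _ inversions_subset, of n w] by (simp add: inv_len_eq_card_inversions)

lemma inv_len_longest: "inv_len n (longest n) = (\<Sum>i\<in>{1..<n}. n - i)"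
proof -
  have "inversions n (longest n) = Sigma {1..<n} (\<lambda>i. {i<..n})"
    by (auto simp: inversions_def longest_def)
  then show ?thesis
    by (simp add: inv_len_eq_card_inversions card_SigmaI)
qed

lemma inv_len_comp_transpose_ascent:
  assumes "1 \<le> i" "i < n" "w i < w (Suc i)"
  shows "inv_len n (w \<circ> transpose i (Suc i)) = Suc (inv_len n w)"
proof -
  let ?t = "transpose i (Suc i)"
  let ?\<phi> = "map_prod ?t ?t"
  have "inversions n (w \<circ> ?t) = insert (i, Suc i) (?\<phi> ` inversions n w)"
  proof (rule set_eqI)
    fix x :: "nat \<times> nat"
    obtain p q where x: "x = (p, q)"
      by (cases x)
    have "(p, q) \<in> ?\<phi> ` inversions n w \<longleftrightarrow> (?t p, ?t q) \<in> inversions n w"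
      by (force simp: transpose_eq_iff)
    moreover have "(p, q) \<in> inversions n (w \<circ> ?t) \<longleftrightarrow> (p, q) = (i, Suc i) \<or> (?t p, ?t q) \<in> inversions n w"
      using assms unfolding inversions_def by (auto simp: transpose_def split: if_splits)
    ultimately show "x \<in> inversions n (w \<circ> ?t) \<longleftrightarrow> x \<in> insert (i, Suc i) (?\<phi> ` inversions n w)"
      using x by auto
  qed
  moreover have "(i, Suc i) \<notin> ?\<phi> ` inversions n w"
    by (auto simp: inversions_def transpose_def split: if_splits)
  moreover have "inj ?\<phi>"
    using map_prod_inj_on[of ?t UNIV ?t UNIV] by (simp add: inj_transpose)
  ultimately show ?thesis
    by (simp add: inv_len_eq_card_inversions card_image inj_on_subset)
qed

lemma decreasing_run_bound:
  assumes "\<And>p. k \<le> p \<Longrightarrow> p < j \<Longrightarrow> w (Suc p) < w p" "k \<le> j"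
  shows "w j + (j - k) \<le> w k"
  using assms
proof (induction j)
  case (Suc j)
  show ?case
  proof (cases "k = Suc j")
    case False
    then have "k \<le> j"
      using Suc.prems(2) by simp
    have "w j + (j - k) \<le> w k"
      by (rule Suc.IH) (use Suc.prems \<open>k \<le> j\<close> in auto)
    moreover have "w (Suc j) < w j"
      using Suc.prems(1) \<open>k \<le> j\<close> by simp
    ultimately show ?thesis
      using \<open>k \<le> j\<close> by simp
  qed simp
qed simp

lemma no_ascent_imp_longest:
  assumes perm: "w permutes {1..n}" and descent: "\<And>i. 1 \<le> i \<Longrightarrow> i < n \<Longrightarrow> w (Suc i) < w i"
  shows "w = longest n"
proof
  fix k
  show "w k = longest n k"
  proof (cases "k \<in> {1..n}")
    case False
    then show ?thesis
      using permutes_not_in[OF perm False] by (auto simp: longest_def)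
  next
    case True
    have "w k + (k - 1) \<le> w 1" "w n + (n - k) \<le> w k"
      by (rule decreasing_run_bound; use True descent in force)+
    moreover have "w 1 \<le> n" "1 \<le> w n"
      using permutes_in_image[OF perm, of 1] permutes_in_image[OF perm, of n] True by auto
    ultimately show ?thesis
      using True by (simp add: longest_def)
  qed
qed


definition non_lr_maxima :: "nat \<Rightarrow> (nat \<Rightarrow> nat) \<Rightarrow> nat \<Rightarrow> nat set" where
  "non_lr_maxima n w k = {j. k \<le> j \<and> j \<le> n \<and> (\<exists>p. k \<le> p \<and> p < j \<and> w j < w p)}"

lemma finite_non_lr_maxima [simp]: "finite (non_lr_maxima n w k)"
  by (rule finite_subset[of _ "{..n}"]) (auto simp: non_lr_maxima_def)

lemma card_non_lr_maxima_Suc_le: "card (non_lr_maxima n w (Suc k)) \<le> card (non_lr_maxima n w k)"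
  by (rule card_mono) (auto simp: non_lr_maxima_def dest: Suc_leD)

lemma card_non_lr_maxima_longest:
  assumes "1 \<le> k"
  shows "n - k \<le> card (non_lr_maxima n (longest n) k)"
proof -
  have "{Suc k..n} \<subseteq> non_lr_maxima n (longest n) k"
    using assms by (auto simp: non_lr_maxima_def longest_def intro!: exI[of _ k])
  then show ?thesis
    using card_mono[of "non_lr_maxima n (longest n) k" "{Suc k..n}"] by simp
qed

lemma card_non_lr_maxima_lt_inv_len:
  assumes "contains_321 n w"
  shows "card (non_lr_maxima n w 1) < inv_len n w"
proof -
  obtain i j k where ijk: "1 \<le> i" "i < j" "j < k" "k \<le> n" "w i > w j" "w j > w k"
    using assms by (auto simp: contains_321_def)
  have "non_lr_maxima n w 1 = snd ` inversions n w"
    by (force simp: non_lr_maxima_def inversions_def)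
  moreover have "card (snd ` inversions n w) \<noteq> card (inversions n w)"
  proof
    assume "card (snd ` inversions n w) = card (inversions n w)"
    then have "inj_on snd (inversions n w)"
      by (simp add: inj_on_iff_eq_card)
    moreover have "(i, k) \<in> inversions n w" "(j, k) \<in> inversions n w"
      using ijk by (auto simp: inversions_def)
    ultimately have "(i, k) = (j, k)"
      by (metis inj_onD snd_conv)
    then show False
      using \<open>i < j\<close> by simp
  qed
  ultimately show ?thesis
    using card_image_le[of "inversions n w" snd] by (simp add: inv_len_eq_card_inversions)
qed

lemma card_non_lr_maxima_transpose_at:
  assumes "w i < w (Suc i)"
  shows "card (non_lr_maxima n (w \<circ> transpose i (Suc i)) i) \<le> Suc (card (non_lr_maxima n w (Suc i)))"
proof -
  have "non_lr_maxima n (w \<circ> transpose i (Suc i)) i \<subseteq> insert (Suc i) (non_lr_maxima n w (Suc i))"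
  proof
    fix j
    assume "j \<in> non_lr_maxima n (w \<circ> transpose i (Suc i)) i"
    then obtain p where p: "i \<le> j" "j \<le> n" "i \<le> p" "p < j"
        "w (transpose i (Suc i) j) < w (transpose i (Suc i) p)"
      by (auto simp: non_lr_maxima_def)
    show "j \<in> insert (Suc i) (non_lr_maxima n w (Suc i))"
    proof (cases "Suc i < j")
      case True
      have "\<exists>q. Suc i \<le> q \<and> q < j \<and> w j < w q"
      proof (cases "p \<le> Suc i")
        case True
        then have "w j < w (Suc i)"
          using p \<open>Suc i < j\<close> assms by (auto simp: transpose_def le_Suc_eq)
        then show ?thesis
          using \<open>Suc i < j\<close> by blast
      next
        case False
        then show ?thesis
          using p \<open>Suc i < j\<close> by (intro exI[of _ p]) auto
      qed
      then show ?thesis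
        using True p by (simp add: non_lr_maxima_def)
    next
      case False
      then show ?thesis
        using p by simp
    qed
  qed
  then have "card (non_lr_maxima n (w \<circ> transpose i (Suc i)) i)
      \<le> card (insert (Suc i) (non_lr_maxima n w (Suc i)))"
    by (rule card_mono[rotated]) simp
  then show ?thesis
    by (simp add: card_insert_if split: if_splits)
qed

lemma card_non_lr_maxima_transpose_above:
  assumes "w i < w (Suc i)" "Suc i \<le> k"
  shows "card (non_lr_maxima n (w \<circ> transpose i (Suc i)) k) \<le> card (non_lr_maxima n w k)"
proof (rule card_mono)
  show "non_lr_maxima n (w \<circ> transpose i (Suc i)) k \<subseteq> non_lr_maxima n w k"
  proof
    fix j
    assume "j \<in> non_lr_maxima n (w \<circ> transpose i (Suc i)) k"
    then obtain p where p: "k \<le> j" "j \<le> n" "k \<le> p" "p < j"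
        "w (transpose i (Suc i) j) < w (transpose i (Suc i) p)"
      by (auto simp: non_lr_maxima_def)
    have "w j < w (if p = Suc i then Suc i else p)"
      using p assms by (auto simp: transpose_def split: if_splits)
    then show "j \<in> non_lr_maxima n w k"
      using p assms by (auto simp: non_lr_maxima_def split: if_splits)
  qed
qed simp

lemma card_non_lr_maxima_transpose_below:
  assumes "w i < w (Suc i)" "i < n" "1 \<le> k" "k < i"
    and descent: "\<And>p. 1 \<le> p \<Longrightarrow> p < i \<Longrightarrow> w (Suc p) < w p"
  shows "card (non_lr_maxima n (w \<circ> transpose i (Suc i)) k) \<le> card (non_lr_maxima n w k)"
proof -
  let ?t = "transpose i (Suc i)"
  have "w i < w k"
    using decreasing_run_bound[of k i w] descent assms by force
  have "?t ` non_lr_maxima n (w \<circ> ?t) k \<subseteq> non_lr_maxima n w k"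
  proof
    fix j'
    assume "j' \<in> ?t ` non_lr_maxima n (w \<circ> ?t) k"
    then obtain j p where j: "j' = ?t j" "k \<le> j" "j \<le> n" "k \<le> p" "p < j" "w (?t j) < w (?t p)"
      by (auto simp: non_lr_maxima_def)
    have "k \<le> ?t j" "?t j \<le> n"
      using j assms by (auto simp: transpose_def)
    moreover have "\<exists>q. k \<le> q \<and> q < ?t j \<and> w (?t j) < w q"
    proof (cases "?t p < ?t j")
      case True
      then show ?thesis
        using j assms by (intro exI[of _ "?t p"]) (auto simp: transpose_def)
    next
      case False
      \<comment> \<open>only the pair \<open>p = i\<close>, \<open>j = Suc i\<close> changes its relative order\<close>
      then have "?t j = i"
        using j by (auto simp: transpose_def split: if_splits)
      then show ?thesis
        using \<open>w i < w k\<close> assms by (intro exI[of _ k]) auto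
    qed
    ultimately show "j' \<in> non_lr_maxima n w k"
      using j(1) by (simp add: non_lr_maxima_def)
  qed
  then have "card (?t ` non_lr_maxima n (w \<circ> ?t) k) \<le> card (non_lr_maxima n w k)"
    by (rule card_mono[rotated]) simp
  then show ?thesis
    by (simp add: card_image inj_on_subset[OF inj_transpose])
qed

section \<open>The support of a Schubert polynomial\<close>

definition staircase :: "nat \<Rightarrow> (nat \<Rightarrow>\<^sub>0 nat)" where
  "staircase n = (\<Sum>i\<in>{1..<n}. Poly_Mapping.single i (n - i))"

lemma lookup_staircase: "Poly_Mapping.lookup (staircase n) k = (if k \<in> {1..<n} then n - k else 0)"
  by (simp add: staircase_def lookup_sum lookup_single when_def sum.delta')

lemma prod_var_power_staircase: "(\<Prod>i\<in>{1..<n}. var i ^ (n - i)) = Defs.mono (staircase n)"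
  by (simp add: var_power prod_mono staircase_def)

lemma total_degree_staircase: "total_degree (staircase n) = inv_len n (longest n)"
  by (simp add: staircase_def total_degree_sum inv_len_longest)

definition bounded_support :: "nat \<Rightarrow> (nat \<Rightarrow> nat) \<Rightarrow> mpoly \<Rightarrow> bool" where
  "bounded_support n w f \<longleftrightarrow>
     (\<forall>m\<in>Poly_Mapping.keys f. total_degree m = inv_len n w \<and>
        (\<forall>k\<ge>1. Poly_Mapping.lookup m k \<le> card (non_lr_maxima n w k)))"

lemma bounded_support_longest: "bounded_support n (longest n) (Defs.mono (staircase n))"
  using card_non_lr_maxima_longest
  by (auto simp: bounded_support_def lookup_staircase total_degree_staircase)

lemma bounded_support_divdiff:
  assumes bounded: "bounded_support n (w \<circ> transpose i (Suc i)) f"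
    and i: "1 \<le> i" "i < n" and ascent: "w i < w (Suc i)"
    and descent: "\<And>p. 1 \<le> p \<Longrightarrow> p < i \<Longrightarrow> w (Suc p) < w p"
  shows "bounded_support n w (divdiff i f)"
  unfolding bounded_support_def
proof (intro ballI conjI allI impI)
  let ?u = "w \<circ> transpose i (Suc i)"
  fix m'
  assume "m' \<in> Poly_Mapping.keys (divdiff i f)"
  then obtain m g where m: "m \<in> Poly_Mapping.keys f"
    and m': "m' = replace_pair i g (Poly_Mapping.lookup m i + Poly_Mapping.lookup m (Suc i) - 1 - g) m"
    and g: "min (Poly_Mapping.lookup m i) (Poly_Mapping.lookup m (Suc i)) \<le> g"
           "g < max (Poly_Mapping.lookup m i) (Poly_Mapping.lookup m (Suc i))"
    by (rule keys_divdiff)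
  define a where "a = Poly_Mapping.lookup m i"
  define b where "b = Poly_Mapping.lookup m (Suc i)"
  have degree: "total_degree m = inv_len n ?u"
    and bound: "\<And>k. 1 \<le> k \<Longrightarrow> Poly_Mapping.lookup m k \<le> card (non_lr_maxima n ?u k)"
    using bounded m unfolding bounded_support_def by auto
  have "total_degree m' + a + b = total_degree m + g + (a + b - 1 - g)"
    using total_degree_replace_pair[of i g "a + b - 1 - g" m] by (simp add: m' a_def b_def)
  then show "total_degree m' = inv_len n w"
    using g degree inv_len_comp_transpose_ascent[OF i ascent] by (simp add: a_def b_def)
  have top: "max a b - 1 \<le> card (non_lr_maxima n w (Suc i))"
    using bound[of i] bound[of "Suc i"] i card_non_lr_maxima_transpose_at[OF ascent, of n]
      card_non_lr_maxima_transpose_above[OF ascent le_refl, of n]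
    by (simp add: a_def b_def)
  fix k :: nat
  assume "1 \<le> k"
  consider "k = i" | "k = Suc i" | "k < i" | "Suc i < k"
    by linarith
  then show "Poly_Mapping.lookup m' k \<le> card (non_lr_maxima n w k)"
  proof cases
    case 1
    then show ?thesis
      using top g card_non_lr_maxima_Suc_le[of n w i] by (simp add: m' a_def b_def)
  next
    case 2
    then show ?thesis
      using top g by (simp add: m' a_def b_def)
  next
    case 3
    then show ?thesis
      using bound[OF \<open>1 \<le> k\<close>] card_non_lr_maxima_transpose_below[OF ascent i(2) \<open>1 \<le> k\<close> 3 descent]
      by (simp add: m')
  next
    case 4
    then show ?thesis
      using bound[OF \<open>1 \<le> k\<close>] card_non_lr_maxima_transpose_above[OF ascent, of k n]
      by (simp add: m')
  qed
qed

lemma permutes_not_ascent_imp_descent: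
  "w permutes A \<Longrightarrow> \<not> w p < w (Suc p) \<Longrightarrow> w (Suc p) < w p"
  by (metis injD n_not_Suc_n nat_neq_iff permutes_inj)

lemma bounded_support_schubert:
  assumes S: "is_schubert_family n S" and "w permutes {1..n}"
  shows "bounded_support n w (S w)"
  using assms(2)
proof (induction "n * n - inv_len n w" arbitrary: w rule: less_induct)
  case less
  show ?case
  proof (cases "\<exists>i. 1 \<le> i \<and> i < n \<and> w i < w (Suc i)")
    case False
    then have "w = longest n"
      using permutes_not_ascent_imp_descent[OF less.prems]
      by (intro no_ascent_imp_longest[OF less.prems]) blast
    moreover have "S (longest n) = Defs.mono (staircase n)"
      using S unfolding is_schubert_family_def prod_var_power_staircase by blast
    ultimately show ?thesis
      using bounded_support_longest by simp
  next
    case True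
    then obtain i where i: "1 \<le> i" "i < n" and ascent: "w i < w (Suc i)"
      and first: "\<And>p. p < i \<Longrightarrow> \<not> (1 \<le> p \<and> p < n \<and> w p < w (Suc p))"
      using exists_least_iff[THEN iffD1, OF True] by blast
    have descent: "w (Suc p) < w p" if "1 \<le> p" "p < i" for p
      using first[of p] that i permutes_not_ascent_imp_descent[OF less.prems] by simp
    define u where "u = w \<circ> transpose i (Suc i)"
    have u: "u permutes {1..n}"
      unfolding u_def using i by (intro permutes_compose[OF permutes_swap_id less.prems]) auto
    have length: "inv_len n u = Suc (inv_len n w)"
      unfolding u_def by (rule inv_len_comp_transpose_ascent[OF i ascent])
    have "bounded_support n u (S u)"
      using length inv_len_le[of n u] u by (intro less.hyps) auto
    then have "bounded_support n w (divdiff i (S u))"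
      unfolding u_def by (rule bounded_support_divdiff[OF _ i ascent descent])
    moreover have "divdiff i (S u) = S w"
      using S u i length unfolding is_schubert_family_def by (simp add: u_def comp_assoc)
    ultimately show ?thesis
      by simp
  qed
qed

section \<open>Products of complete homogeneous polynomials\<close>

definition no_pure_x1_terms :: "mpoly \<Rightarrow> bool" where
  "no_pure_x1_terms f \<longleftrightarrow> (\<forall>m\<in>Poly_Mapping.keys f. \<not> Poly_Mapping.keys m \<subseteq> {1})"

lemma no_pure_x1_terms_zero: "no_pure_x1_terms 0"
  by (simp add: no_pure_x1_terms_def)

lemma no_pure_x1_terms_add: "no_pure_x1_terms f \<Longrightarrow> no_pure_x1_terms g \<Longrightarrow> no_pure_x1_terms (f + g)"
  unfolding no_pure_x1_terms_def using keys_add[of f g] by blast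

lemma no_pure_x1_terms_mult_right:
  assumes "no_pure_x1_terms f"
  shows "no_pure_x1_terms (f * g)"
  unfolding no_pure_x1_terms_def
proof
  fix m
  assume "m \<in> Poly_Mapping.keys (f * g)"
  then obtain a b where "m = a + b" "a \<in> Poly_Mapping.keys f"
    using keys_mult[of f g] by blast
  moreover have "Poly_Mapping.keys a \<subseteq> Poly_Mapping.keys (a + b)"
    by (simp add: in_keys_iff lookup_add subset_iff)
  ultimately show "\<not> Poly_Mapping.keys m \<subseteq> {1}"
    using assms unfolding no_pure_x1_terms_def by blast
qed

lemma no_pure_x1_terms_mult_left: "no_pure_x1_terms g \<Longrightarrow> no_pure_x1_terms (f * g)"
  using no_pure_x1_terms_mult_right[of g f] by (simp add: mult.commute)

lemma finite_complete_h_support: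
  "finite {m :: nat \<Rightarrow>\<^sub>0 nat. Poly_Mapping.keys m \<subseteq> {1..i} \<and> (\<Sum>k\<in>{1..i}. Poly_Mapping.lookup m k) = j}"
  (is "finite ?M")
proof (rule finite_imageD)
  have "Poly_Mapping.lookup m k \<le> j" if "m \<in> ?M" "k \<in> {1..i}" for m k
    using that member_le_sum[of k "{1..i}" "Poly_Mapping.lookup m"] by simp
  then have "Poly_Mapping.lookup ` ?M \<subseteq> {f. \<forall>k. (k \<in> {1..i} \<longrightarrow> f k \<in> {0..j}) \<and> (k \<notin> {1..i} \<longrightarrow> f k = 0)}"
    by (auto simp: in_keys_iff)
  then show "finite (Poly_Mapping.lookup ` ?M)"
    by (rule finite_subset) (intro finite_set_of_finite_funs; simp)
  show "inj_on Poly_Mapping.lookup ?M"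
    by (simp add: inj_on_def poly_mapping_eqI)
qed

lemma complete_h_eq_x1_power_plus:
  assumes "1 \<le> i"
  obtains r where "no_pure_x1_terms r" "complete_h i j = Defs.mono (Poly_Mapping.single 1 j) + r"
proof -
  define M where "M = {m. Poly_Mapping.keys m \<subseteq> {1..i} \<and> (\<Sum>k\<in>{1..i}. Poly_Mapping.lookup m k) = j}"
  have "Poly_Mapping.single 1 j \<in> M"
    using assms by (auto simp: M_def lookup_single when_def sum.delta')
  then have "complete_h i j = Defs.mono (Poly_Mapping.single 1 j) + (\<Sum>m\<in>M - {Poly_Mapping.single 1 j}. Defs.mono m)"
    using finite_complete_h_support by (simp add: complete_h_def M_def sum.remove)
  moreover have "no_pure_x1_terms (\<Sum>m\<in>M - {Poly_Mapping.single 1 j}. Defs.mono m)"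
    unfolding no_pure_x1_terms_def
  proof
    fix m
    assume "m \<in> Poly_Mapping.keys (\<Sum>m\<in>M - {Poly_Mapping.single 1 j}. Defs.mono m)"
    then have m: "m \<in> M" "m \<noteq> Poly_Mapping.single 1 j"
      using keys_sum[of Defs.mono "M - {Poly_Mapping.single 1 j}"] by auto
    show "\<not> Poly_Mapping.keys m \<subseteq> {1}"
    proof
      assume "Poly_Mapping.keys m \<subseteq> {1}"
      then have single: "m = Poly_Mapping.single 1 (Poly_Mapping.lookup m 1)"
        by (intro poly_mapping_eqI) (auto simp: lookup_single when_def in_keys_iff)
      have "(\<Sum>k\<in>{1..i}. Poly_Mapping.lookup m k) = Poly_Mapping.lookup m 1"
        using assms by (subst single) (simp add: lookup_single when_def sum.delta')
      then have "Poly_Mapping.lookup m 1 = j"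
        using m(1) by (simp add: M_def)
      with single show False
        using m(2) by simp
    qed
  qed
  ultimately show ?thesis
    using that by blast
qed

lemma prod_complete_h_eq_x1_power_plus:
  assumes "finite K" "0 \<notin> K"
  shows "\<exists>r. no_pure_x1_terms r \<and>
           (\<Prod>i\<in>K. complete_h i (e i)) = Defs.mono (Poly_Mapping.single 1 (\<Sum>i\<in>K. e i)) + r"
  using assms
proof (induction K rule: finite_induct)
  case empty
  show ?case
    by (intro exI[of _ 0]) (simp add: no_pure_x1_terms_zero)
next
  case (insert i K)
  then obtain r where r: "no_pure_x1_terms r"
    "(\<Prod>i\<in>K. complete_h i (e i)) = Defs.mono (Poly_Mapping.single 1 (\<Sum>i\<in>K. e i)) + r"
    by blast
  have "1 \<le> i"
    using insert.prems by (cases i) auto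
  then obtain r' where r': "no_pure_x1_terms r'"
    "complete_h i (e i) = Defs.mono (Poly_Mapping.single 1 (e i)) + r'"
    by (rule complete_h_eq_x1_power_plus)
  let ?a = "Defs.mono (Poly_Mapping.single 1 (e i))"
  let ?b = "Defs.mono (Poly_Mapping.single 1 (\<Sum>i\<in>K. e i))"
  have "(\<Prod>i\<in>insert i K. complete_h i (e i)) = (?a + r') * (?b + r)"
    using insert.hyps r(2) r'(2) by simp
  also have "\<dots> = ?a * ?b + (?a * r + r' * (?b + r))"
    by (simp add: distrib_left distrib_right)
  also have "?a * ?b = Defs.mono (Poly_Mapping.single 1 (\<Sum>i\<in>insert i K. e i))"
    using insert.hyps by (simp add: mono_mult single_add)
  finally have "(\<Prod>i\<in>insert i K. complete_h i (e i)) =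
      Defs.mono (Poly_Mapping.single 1 (\<Sum>i\<in>insert i K. e i)) + (?a * r + r' * (?b + r))" .
  moreover have "no_pure_x1_terms (?a * r + r' * (?b + r))"
    using r(1) r'(1) by (intro no_pure_x1_terms_add no_pure_x1_terms_mult_left no_pure_x1_terms_mult_right)
  ultimately show ?case
    by blast
qed

lemma complete_hom_monomial_has_x1_power:
  assumes "complete_hom_monomial f"
  obtains d where "Poly_Mapping.single 1 d \<in> Poly_Mapping.keys f"
proof -
  obtain a :: "nat \<Rightarrow>\<^sub>0 nat" where "0 \<notin> Poly_Mapping.keys a"
    and "f = (\<Prod>i\<in>Poly_Mapping.keys a. complete_h i (Poly_Mapping.lookup a i))"
    using assms unfolding complete_hom_monomial_def by blast
  moreover define d where "d = sum (Poly_Mapping.lookup a) (Poly_Mapping.keys a)"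
  ultimately obtain r where r: "no_pure_x1_terms r" and f: "f = Defs.mono (Poly_Mapping.single 1 d) + r"
    using prod_complete_h_eq_x1_power_plus[of "Poly_Mapping.keys a" "Poly_Mapping.lookup a"] by auto
  have "Poly_Mapping.keys (Poly_Mapping.single 1 d) \<subseteq> {1 :: nat}"
    by simp
  then have "Poly_Mapping.single 1 d \<notin> Poly_Mapping.keys r"
    using r unfolding no_pure_x1_terms_def by blast
  then have "Poly_Mapping.lookup f (Poly_Mapping.single 1 d) = 1"
    by (simp add: f lookup_add Defs.mono_def in_keys_iff)
  then show ?thesis
    by (intro that[of d]) (simp add: in_keys_iff)
qed

theorem lemma19:
  fixes n :: nat and w :: "nat \<Rightarrow> nat" and S :: "(nat \<Rightarrow> nat) \<Rightarrow> mpoly"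
  assumes "is_schubert_family n S"
    and "w permutes {1..n}"
    and "contains_321 n w"
  shows "\<not> complete_hom_monomial (S w)"
proof
  assume "complete_hom_monomial (S w)"
  then obtain d where d: "Poly_Mapping.single 1 d \<in> Poly_Mapping.keys (S w)"
    by (rule complete_hom_monomial_has_x1_power)
  have "bounded_support n w (S w)"
    using assms(1,2) by (rule bounded_support_schubert)
  then have "d = inv_len n w" "d \<le> card (non_lr_maxima n w 1)"
    using d unfolding bounded_support_def by force+
  then show False
    using card_non_lr_maxima_lt_inv_len[OF assms(3)] by simp
qed

end
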